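(* For all $h\ge1$ and $i_1,\dots,i_h,j_1,\dots,j_h\in\{1,\dots,n\}$, $\mathcal K\big([i_1,\dots,i_h|j_1,\dots,j_h]^*\big)=(i_1|j_1)(i_2|j_2)\cdots(i_h|j_h)\in\mathbb{C}[M_{n,n}]$.
   Context: $\mathbb{C}[M_{n,n}]$ is the polynomial algebra in commuting indeterminates $(i|j)$, $1\le i,j\le n$. $D^l_{ij}$ is the derivation of $\mathbb{C}[M_{n,n}]$ with $D^l_{ij}((h|k))=\delta_{jh}(i|k)$. Let $\rho_{ij}(\mathbf p)=D^l_{ij}(\mathbf p)+(i|j)\mathbf p$; the map $e_{ij}\mapsto\rho_{ij}$ extends to an algebra morphism $\tau:\mathbf{U}(gl(n))\to\mathrm{End}_{\mathbb C}(\mathbb{C}[M_{n,n}])$. The Koszul map is the linear map $\mathcal K:\mathbf{U}(gl(n))\to\mathbb{C}[M_{n,n}]$, $\mathcal K(\mathbf P)=\tau(\mathbf P)(1)$. Virtual variables: $A_0=\{\alpha_1,\dots,\alpha_{m_0}\}$ (parity $0$), $A_1=\{\beta_1,\dots,\beta_{m_1}\}$ (parity $1$), $L=\{1,\dots,n\}$ (parity $1$), $m_0,m_1$ large; $gl(m_0|m_1+n)$ has homogeneous basis $e_{a,b}$ of parity $|a|+|b|$ and superbracket $[e_{a,b},e_{c,d}]=\delta_{bc}e_{a,d}-(-1)^{(|a|+|b|)(|c|+|d|)}\delta_{ad}e_{c,b}$, with $\mathbf{U}(gl(n))\subset\mathbf{U}(gl(m_0|m_1+n))$. A product $e_{a_m,b_m}\cdots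 e_{a_1,b_1}$ is irregular if for some $i\le m$ and virtual $\gamma$, $\#\{j\le i:b_j=\gamma\}>\#\{j<i:a_j=\gamma\}$; $\mathbf{Irr}$ is the left ideal they generate; it is known $Virt=\mathbf{U}(gl(n))\oplus\mathbf{Irr}$ is a subalgebra with $\mathbf{Irr}$ a two-sided ideal, and $\mathfrak p$ is the projection $Virt\to\mathbf{U}(gl(n))$ with kernel $\mathbf{Irr}$. The column Capelli *-bitableau is $[i_1,\dots,i_h|j_1,\dots,j_h]^*=\mathfrak p(e_{i_1\beta_1}\cdots e_{i_h\beta_h}e_{\beta_1j_1}\cdots e_{\beta_hj_h})$ with distinct negative virtual $\beta_1,\dots,\beta_h$. *)

theory Defs
  imports Complex_Main "HOL-Library.Poly_Mapping"
begin

text \<open>Polynomials in commuting indeterminates (i|j), represented as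
  finitely supported maps from monomials (exponent maps on index pairs) to
  complex coefficients; multiplication is the convolution product of
  Poly_Mapping.\<close>

type_synonym cpoly = "((nat \<times> nat) \<Rightarrow>\<^sub>0 nat) \<Rightarrow>\<^sub>0 complex"

definition var :: "nat \<Rightarrow> nat \<Rightarrow> cpoly" where
  "var i j = Poly_Mapping.single (Poly_Mapping.single (i, j) 1) 1"

definition const :: "complex \<Rightarrow> cpoly" where
  "const c = Poly_Mapping.single 0 c"

text \<open>The derivation D^l_{ij}, i.e. sum over k of (i|k) times the partial
  derivative with respect to (j|k), defined on monomials and extended linearly.\<close>

definition Dl :: "nat \<Rightarrow> nat \<Rightarrow> nat \<Rightarrow> cpoly \<Rightarrow> cpoly" where
  "Dl n i j p =
     (\<Sum>m\<in>Poly_Mapping.keys p. \<Sum>k\<in>{1..n}.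
        Poly_Mapping.single
          (m - Poly_Mapping.single (j, k) 1 + Poly_Mapping.single (i, k) 1)
          (Poly_Mapping.lookup p m * of_nat (Poly_Mapping.lookup m (j, k))))"

definition rho :: "nat \<Rightarrow> nat \<Rightarrow> nat \<Rightarrow> cpoly \<Rightarrow> cpoly" where
  "rho n i j p = Dl n i j p + var i j * p"

text \<open>Pos k = positive virtual alpha_k (parity 0), Neg k = negative virtual
  beta_k (parity 1), Prop i = proper symbol i (parity 1).\<close>

datatype letter = Pos nat | Neg nat | Prop nat

fun parity :: "letter \<Rightarrow> nat" where
  "parity (Pos _) = 0" | "parity (Neg _) = 1" | "parity (Prop _) = 1"

fun virtual :: "letter \<Rightarrow> bool" where
  "virtual (Prop _) = False" | "virtual _ = True"

definition valid_letter :: "nat \<Rightarrow> letter \<Rightarrow> bool" where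
  "valid_letter n a = (case a of Prop i \<Rightarrow> 1 \<le> i \<and> i \<le> n | _ \<Rightarrow> True)"

fun prop_index :: "letter \<Rightarrow> nat" where
  "prop_index (Prop i) = i" | "prop_index _ = 0"

text \<open>A word [(a_m,b_m), ..., (a_1,b_1)] (head = leftmost factor) stands for
  the monomial e_{a_m,b_m} ... e_{a_1,b_1}.\<close>

type_synonym gen = "letter \<times> letter"
type_synonym word = "gen list"
type_synonym free = "word \<Rightarrow> complex"

definition wmono :: "word \<Rightarrow> free" where
  "wmono w = (\<lambda>v. if v = w then 1 else 0)"

definition valid_word :: "nat \<Rightarrow> word \<Rightarrow> bool" where
  "valid_word n w = (\<forall>(a, b)\<in>set w. valid_letter n a \<and> valid_letter n b)"

inductive_set lin_span :: "free set \<Rightarrow> free set" for G where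
  zero: "(\<lambda>_. 0) \<in> lin_span G"
| step: "g \<in> G \<Longrightarrow> x \<in> lin_span G \<Longrightarrow> (\<lambda>w. c * g w + x w) \<in> lin_span G"

text \<open>Two-sided ideal defining U(gl(m0|m1+n)): spanned by
  u (e1 e2 - (-1)^{|e1||e2|} e2 e1 - [e1,e2]) v.\<close>

definition super_rel :: "word \<Rightarrow> gen \<Rightarrow> gen \<Rightarrow> word \<Rightarrow> free" where
  "super_rel u g1 g2 v =
    (let (a, b) = g1; (c, d) = g2;
         s = (-1::complex) ^ ((parity a + parity b) * (parity c + parity d))
     in (\<lambda>w. wmono (u @ [g1, g2] @ v) w - s * wmono (u @ [g2, g1] @ v) w
            - ((if b = c then wmono (u @ [(a, d)] @ v) w else 0)
               - s * (if a = d then wmono (u @ [(c, b)] @ v) w else 0))))"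

definition rel_gens :: "nat \<Rightarrow> free set" where
  "rel_gens n = {super_rel u g1 g2 v | u g1 g2 v.
      valid_word n u \<and> valid_word n [g1, g2] \<and> valid_word n v}"

text \<open>Irregular monomials: for the product e_{a_m,b_m} ... e_{a_1,b_1}
  (list w, so rev w ! (j-1) = (a_j, b_j)), there exist i and a virtual gamma
  with #{j \<le> i. b_j = gamma} > #{j < i. a_j = gamma}.\<close>

definition irregular :: "word \<Rightarrow> bool" where
  "irregular w = (let r = rev w in
     \<exists>i < length r. \<exists>\<gamma>. virtual \<gamma> \<and>
        card {j. j \<le> i \<and> snd (r ! j) = \<gamma>} > card {j. j < i \<and> fst (r ! j) = \<gamma>})"

definition irr_gens :: "nat \<Rightarrow> free set" where
  "irr_gens n = {wmono (u @ m) | u m. valid_word n u \<and> valid_word n m \<and> irregular m}"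

text \<open>Congruence modulo Irr in U(gl(m0|m1+n)): difference lies in I + Irr.\<close>

definition cong_Irr :: "nat \<Rightarrow> free \<Rightarrow> free \<Rightarrow> bool" where
  "cong_Irr n x y = ((\<lambda>w. x w - y w) \<in> lin_span (rel_gens n \<union> irr_gens n))"

text \<open>Elements of the free algebra on the generators of gl(n) (representatives
  of elements of U(gl(n))).\<close>

definition in_Ugln :: "nat \<Rightarrow> free \<Rightarrow> bool" where
  "in_Ugln n u = (finite {w. u w \<noteq> 0} \<and>
     (\<forall>w. u w \<noteq> 0 \<longrightarrow> (\<forall>(a, b)\<in>set w. \<exists>i j. a = Prop i \<and> b = Prop j
                              \<and> 1 \<le> i \<and> i \<le> n \<and> 1 \<le> j \<and> j \<le> n)))"

definition K_word :: "nat \<Rightarrow> word \<Rightarrow> cpoly" where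
  "K_word n w = foldr (\<lambda>(a, b) p. rho n (prop_index a) (prop_index b) p) w 1"

definition Koszul :: "nat \<Rightarrow> free \<Rightarrow> cpoly" where
  "Koszul n u = (\<Sum>w\<in>{w. u w \<noteq> 0}. const (u w) * K_word n w)"

definition capelli_word :: "nat list \<Rightarrow> nat list \<Rightarrow> nat list \<Rightarrow> word" where
  "capelli_word is js bs =
     map (\<lambda>(i, b). (Prop i, Neg b)) (zip is bs) @ map (\<lambda>(b, j). (Neg b, Prop j)) (zip bs js)"

end

theory Submission
  imports Defs
begin

text \<open>Let gl(m0|m1+n) act on the supersymmetric algebra in the variables (a|k), a a letter
  and k a column index, by letting e_{ab} act as the superpolarization D_{ab} (replace one
  b by a) plus multiplication by (a|b) when b is proper. Applying a monomial to 1 and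
  sending every variable with a virtual letter to 0 gives a linear functional on the free
  algebra. It kills the superbracket relations, since superpolarizations satisfy the
  commutation relations of gl(m0|m1+n); it kills Irr, since an irregular factor must
  polarize away a virtual letter that is not (yet) present; and on monomials in proper
  generators it is the Koszul map, D_{ij} being D^l_{ij} there. So it computes K(u) for the
  representative u of the Capelli bitableau. On the Capelli monomial itself the e_{beta_k j_k}
  create the variables (beta_k|j_k), and then, the beta_k being distinct, each even
  e_{i_k beta_k} has exactly one beta_k to replace, producing (i_k|j_k) without sign.\<close>

section \<open>Superpolarization on words of letter-column variables\<close>

type_synonym svar = "letter \<times> nat"
type_synonym sword = "svar list"
type_synonym sterm = "cpoly \<times> sword"

text \<open>The variable (a|k) of the supersymmetric algebra is odd iff a is even,
  since the column symbols k are odd.\<close>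

definition svar_parity :: "svar \<Rightarrow> nat" where
  "svar_parity x = parity (fst x) + 1"

definition gen_parity :: "letter \<Rightarrow> letter \<Rightarrow> nat" where
  "gen_parity a b = parity a + parity b"

abbreviation polar_sign :: "letter \<Rightarrow> letter \<Rightarrow> svar \<Rightarrow> cpoly" where
  "polar_sign a b x \<equiv> (-1) ^ (gen_parity a b * svar_parity x)"

text \<open>A word stands for the product of its variables, a list of coefficient-word pairs
  for a linear combination of words.\<close>

fun polar :: "letter \<Rightarrow> letter \<Rightarrow> sword \<Rightarrow> sterm list" where
  "polar a b [] = []"
| "polar a b (x # w) = (if fst x = b then [(1, (a, snd x) # w)] else []) @
     map (\<lambda>(c, q). (polar_sign a b x * c, x # q)) (polar a b w)"

fun is_proper :: "letter \<Rightarrow> bool" where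
  "is_proper (Prop _) = True" | "is_proper _ = False"

definition mult_var :: "letter \<Rightarrow> letter \<Rightarrow> sword \<Rightarrow> sterm list" where
  "mult_var a b p = (if is_proper b then [(1, (a, prop_index b) # p)] else [])"

definition gen_action :: "gen \<Rightarrow> sword \<Rightarrow> sterm list" where
  "gen_action g p = polar (fst g) (snd g) p @ mult_var (fst g) (snd g) p"

definition lin_eval :: "(sword \<Rightarrow> cpoly) \<Rightarrow> sterm list \<Rightarrow> cpoly" where
  "lin_eval F T = sum_list (map (\<lambda>(c, q). c * F q) T)"

text \<open>act r F is the functional F pulled back along the action of the generators in r,
  the head of r acting first; hence the rev in virtual_koszul.\<close>

fun act :: "gen list \<Rightarrow> (sword \<Rightarrow> cpoly) \<Rightarrow> sword \<Rightarrow> cpoly" where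
  "act [] F p = F p"
| "act (g # r) F p = lin_eval (act r F) (gen_action g p)"

fun proper_eval :: "sword \<Rightarrow> cpoly" where
  "proper_eval [] = 1"
| "proper_eval ((Prop i, k) # p) = var i k * proper_eval p"
| "proper_eval ((Pos i, k) # p) = 0"
| "proper_eval ((Neg i, k) # p) = 0"

definition virtual_koszul :: "word \<Rightarrow> cpoly" where
  "virtual_koszul w = act (rev w) proper_eval []"

lemma lin_eval_Nil [simp]: "lin_eval F [] = 0"
  by (simp add: lin_eval_def)

lemma lin_eval_Cons [simp]: "lin_eval F (t # T) = fst t * F (snd t) + lin_eval F T"
  by (cases t) (simp add: lin_eval_def)

lemma lin_eval_append [simp]: "lin_eval F (T1 @ T2) = lin_eval F T1 + lin_eval F T2"
  by (simp add: lin_eval_def)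

lemma lin_eval_map_Cons:
  "lin_eval F (map (\<lambda>(c, q). (s * c, x # q)) T) = s * lin_eval (\<lambda>q. F (x # q)) T"
  by (induct T) (auto simp: algebra_simps)

lemma lin_eval_add: "lin_eval (\<lambda>q. F q + G q) T = lin_eval F T + lin_eval G T"
  by (induct T) (auto simp: algebra_simps)

lemma lin_eval_smult: "lin_eval (\<lambda>q. C * F q) T = C * lin_eval F T"
  by (induct T) (auto simp: algebra_simps)

lemma lin_eval_diff: "lin_eval (\<lambda>q. F q - G q) T = lin_eval F T - lin_eval G T"
  by (induct T) (auto simp: algebra_simps)

lemma lin_eval_zero: "lin_eval (\<lambda>q. 0) T = 0"
  by (induct T) auto

lemma lin_eval_if: "lin_eval (\<lambda>q. if P then F q else 0) T = (if P then lin_eval F T else 0)"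
  by (induct T) auto

lemma lin_eval_cong:
  "(\<And>c q. (c, q) \<in> set T \<Longrightarrow> F q = G q) \<Longrightarrow> lin_eval F T = lin_eval G T"
  by (induct T) force+

lemma lin_eval_eq_0: "(\<And>c q. (c, q) \<in> set T \<Longrightarrow> F q = 0) \<Longrightarrow> lin_eval F T = 0"
  by (induct T) force+

lemma lin_eval_polar_Cons:
  "lin_eval F (polar a b (x # w)) = (if fst x = b then F ((a, snd x) # w) else 0)
     + polar_sign a b x * lin_eval (\<lambda>q. F (x # q)) (polar a b w)"
  by (simp add: lin_eval_map_Cons)

lemma lin_eval_mult_var:
  "lin_eval G (mult_var a b p) = (if is_proper b then G ((a, prop_index b) # p) else 0)"
  by (simp add: mult_var_def)

lemma lin_eval_gen_action:
  "lin_eval G (gen_action g p) = lin_eval G (polar (fst g) (snd g) p) + lin_eval G (mult_var (fst g) (snd g) p)"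
  by (simp add: gen_action_def)

lemma act_Nil_fun [simp]: "act [] F = F"
  by (rule ext) simp

lemma act_single: "act [g] F = (\<lambda>q. lin_eval F (gen_action g q))"
  by (rule ext) simp

lemma act_append: "act (r1 @ r2) F = act r1 (act r2 F)"
  by (induct r1) (auto intro!: ext)

lemma act_smult: "act r (\<lambda>p. C * F p) = (\<lambda>p. C * act r F p)"
  by (induct r) (auto intro!: ext simp: lin_eval_smult)

lemma act_diff: "act r (\<lambda>p. F p - C * G p) = (\<lambda>p. act r F p - C * act r G p)"
  by (induct r) (auto intro!: ext simp: lin_eval_diff lin_eval_smult)

lemma minus_one_power_eq: "even (m + n) \<Longrightarrow> (-1::'a::ring_1) ^ m = (-1) ^ n"
  by (metis even_add neg_one_even_power neg_one_odd_power)

lemma minus_one_power_mult_eq: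
  "even (m + n + k) \<Longrightarrow> (-1::'a::ring_1) ^ m * (-1) ^ n = (-1) ^ k"
  by (metis minus_one_power_eq power_add)

lemma gen_parity_commute: "gen_parity a b = gen_parity b a"
  by (simp add: gen_parity_def)

lemma polar_sign_change_letter:
  "polar_sign a b (c, k) = (-1) ^ (gen_parity a b * gen_parity c d) * polar_sign a b (d, k')"
proof -
  have "even (gen_parity a b * gen_parity c d + gen_parity a b * svar_parity (d, k')
          + gen_parity a b * svar_parity (c, k))"
    unfolding gen_parity_def svar_parity_def by (simp add: algebra_simps)
  then show ?thesis
    by (subst minus_one_power_mult_eq) auto
qed

lemma polar_sign_compose: "polar_sign b d x * polar_sign a b x = polar_sign a d x"
proof -
  have "even (gen_parity b d * svar_parity x + gen_parity a b * svar_parity x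
          + gen_parity a d * svar_parity x)"
    unfolding gen_parity_def by (simp add: algebra_simps)
  then show ?thesis by (rule minus_one_power_mult_eq)
qed

lemma is_proper_parity: "is_proper l \<Longrightarrow> parity l = 1"
  by (cases l) auto

section \<open>The superpolarizations satisfy the commutation relations\<close>

lemma lin_eval_polar_polar_Cons:
  "lin_eval (\<lambda>q. lin_eval F (polar a b q)) (polar c d ((e, k) # w)) =
     (if e = d then (if c = b then F ((a, k) # w) else 0)
        + polar_sign a b (c, k) * lin_eval (\<lambda>q. F ((c, k) # q)) (polar a b w) else 0)
   + polar_sign c d (e, k) * ((if e = b then lin_eval (\<lambda>q. F ((a, k) # q)) (polar c d w) else 0)
     + polar_sign a b (e, k) * lin_eval (\<lambda>q. lin_eval (\<lambda>q'. F ((e, k) # q')) (polar a b q)) (polar c d w))"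
  by (simp add: lin_eval_map_Cons lin_eval_add lin_eval_smult lin_eval_if lin_eval_zero)

lemma polar_commutator:
  "lin_eval (\<lambda>q. lin_eval F (polar a b q)) (polar c d p)
     - (-1) ^ (gen_parity a b * gen_parity c d) * lin_eval (\<lambda>q. lin_eval F (polar c d q)) (polar a b p)
   = (if b = c then lin_eval F (polar a d p) else 0)
     - (-1) ^ (gen_parity a b * gen_parity c d) * (if a = d then lin_eval F (polar c b p) else 0)"
proof (induct p arbitrary: F)
  case Nil
  show ?case by simp
next
  case (Cons x w)
  obtain e k where x: "x = (e, k)" by force
  define s where "s = (-1::cpoly) ^ (gen_parity a b * gen_parity c d)"
  define sab where "sab = polar_sign a b x"
  define scd where "scd = polar_sign c d x"
  define A where "A = lin_eval (\<lambda>q. F ((a, k) # q)) (polar c d w)"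
  define C where "C = lin_eval (\<lambda>q. F ((c, k) # q)) (polar a b w)"
  define P where "P = lin_eval (\<lambda>q. lin_eval (\<lambda>q'. F (x # q')) (polar a b q)) (polar c d w)"
  define Q where "Q = lin_eval (\<lambda>q. lin_eval (\<lambda>q'. F (x # q')) (polar c d q)) (polar a b w)"
  define Xad where "Xad = lin_eval (\<lambda>q. F (x # q)) (polar a d w)"
  define Xcb where "Xcb = lin_eval (\<lambda>q. F (x # q)) (polar c b w)"
  have IH: "P - s * Q = (if b = c then Xad else 0) - s * (if a = d then Xcb else 0)"
    using Cons[of "\<lambda>q. F (x # q)"] unfolding P_def Q_def s_def Xad_def Xcb_def .
  have sc: "e = d \<Longrightarrow> polar_sign a b (c, k) = s * sab"
    unfolding s_def sab_def x using polar_sign_change_letter[of a b c k d k] by simp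
  have sd: "e = b \<Longrightarrow> scd = s * polar_sign c d (a, k)"
    unfolding s_def scd_def x using polar_sign_change_letter[of c d b k a k]
    by (simp add: gen_parity_commute mult.commute)
  define sad where "sad = polar_sign a d x"
  define scb where "scb = polar_sign c b x"
  have sab_scd: "b = c \<Longrightarrow> scd * sab = sad" "b = c \<Longrightarrow> sab * scd = sad"
    unfolding sab_def scd_def sad_def using polar_sign_compose[of b d x a] by (simp_all add: mult.commute)
  have sab_scd': "a = d \<Longrightarrow> sab * scd = scb" "a = d \<Longrightarrow> scd * sab = scb"
    unfolding sab_def scd_def scb_def using polar_sign_compose[of a b x c] by (simp_all add: mult.commute)
  have lhs: "lin_eval (\<lambda>q. lin_eval F (polar a b q)) (polar c d (x # w))
       - s * lin_eval (\<lambda>q. lin_eval F (polar c d q)) (polar a b (x # w))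
     = (if e = d \<and> c = b then F ((a, k) # w) else 0)
       - s * (if e = b \<and> a = d then F ((c, k) # w) else 0) + scd * sab * (P - s * Q)"
  proof -
    have "lin_eval (\<lambda>q. lin_eval F (polar a b q)) (polar c d (x # w)) =
        (if e = d then (if c = b then F ((a, k) # w) else 0) + polar_sign a b (c, k) * C else 0)
        + scd * ((if e = b then A else 0) + sab * P)"
      unfolding x A_def C_def P_def sab_def scd_def by (rule lin_eval_polar_polar_Cons)
    moreover have "lin_eval (\<lambda>q. lin_eval F (polar c d q)) (polar a b (x # w)) =
        (if e = b then (if a = d then F ((c, k) # w) else 0) + polar_sign c d (a, k) * A else 0)
        + sab * ((if e = d then C else 0) + scd * Q)"
      unfolding x A_def C_def Q_def sab_def scd_def by (rule lin_eval_polar_polar_Cons)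
    ultimately show ?thesis
      by (cases "e = d"; cases "e = b") (simp_all add: sc sd algebra_simps)
  qed
  have ead: "lin_eval F (polar a d (x # w)) = (if e = d then F ((a, k) # w) else 0) + sad * Xad"
    unfolding Xad_def sad_def x lin_eval_polar_Cons by simp
  have ecb: "lin_eval F (polar c b (x # w)) = (if e = b then F ((c, k) # w) else 0) + scb * Xcb"
    unfolding Xcb_def scb_def x lin_eval_polar_Cons by simp
  have "b = c \<Longrightarrow> a = d \<Longrightarrow> scb = sad"
    using sab_scd sab_scd' by simp
  then show ?case
    unfolding s_def[symmetric] lhs IH ead ecb
    by (cases "b = c"; cases "a = d") (simp_all add: sab_scd sab_scd' algebra_simps)
qed

definition supersymmetric :: "(sword \<Rightarrow> cpoly) \<Rightarrow> bool" where
  "supersymmetric G \<longleftrightarrow> (\<forall>p x y q.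
     G (p @ x # y # q) = (-1) ^ (svar_parity x * svar_parity y) * G (p @ y # x # q))"

lemma supersymmetricD:
  "supersymmetric G \<Longrightarrow> G (p @ x # y # q) = (-1) ^ (svar_parity x * svar_parity y) * G (p @ y # x # q)"
  unfolding supersymmetric_def by blast

lemma supersymmetric_Cons: "supersymmetric G \<Longrightarrow> supersymmetric (\<lambda>q. G (z # q))"
  unfolding supersymmetric_def by (metis append_Cons)

lemma svar_parity_change_letter:
  "(-1::'a::ring_1) ^ (svar_parity (a, k) * v) = (-1) ^ (svar_parity (b, k') * v) * (-1) ^ (gen_parity a b * v)"
proof -
  have "even (svar_parity (b, k') * v + gen_parity a b * v + svar_parity (a, k) * v)"
    unfolding gen_parity_def svar_parity_def by (simp add: algebra_simps)
  then show ?thesis by (rule minus_one_power_mult_eq[symmetric])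
qed

lemma lin_eval_polar_swap_head:
  assumes sym: "supersymmetric G"
  shows "lin_eval G (polar a b (x # y # q))
    = (-1) ^ (svar_parity x * svar_parity y) * lin_eval G (polar a b (y # x # q))"
proof -
  obtain ex kx where x: "x = (ex, kx)" by force
  obtain ey ky where y: "y = (ey, ky)" by force
  define sx where "sx = polar_sign a b x"
  define sy where "sy = polar_sign a b y"
  define sxy where "sxy = (-1::cpoly) ^ (svar_parity x * svar_parity y)"
  define Gx where "Gx = G ((a, kx) # y # q)"
  define Gx' where "Gx' = G (y # (a, kx) # q)"
  define Gy where "Gy = G (x # (a, ky) # q)"
  define Gy' where "Gy' = G ((a, ky) # x # q)"
  define L where "L = lin_eval (\<lambda>q. G (x # y # q)) (polar a b q)"
  define L' where "L' = lin_eval (\<lambda>q. G (y # x # q)) (polar a b q)"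
  have lhs: "lin_eval G (polar a b (x # y # q)) = (if ex = b then Gx else 0) + sx * ((if ey = b then Gy else 0) + sy * L)"
    unfolding lin_eval_polar_Cons sx_def sy_def Gx_def Gy_def L_def x y by simp
  have rhs: "lin_eval G (polar a b (y # x # q)) = (if ey = b then Gy' else 0) + sy * ((if ex = b then Gx' else 0) + sx * L')"
    unfolding lin_eval_polar_Cons sx_def sy_def Gx'_def Gy'_def L'_def x y by simp
  have Gx: "ex = b \<Longrightarrow> Gx = sxy * sy * Gx'"
  proof -
    assume "ex = b"
    have "Gx = (-1) ^ (svar_parity (a, kx) * svar_parity y) * Gx'"
      unfolding Gx_def Gx'_def using supersymmetricD[OF sym, of "[]" "(a, kx)" y q] by simp
    also have "(-1) ^ (svar_parity (a, kx) * svar_parity y) = sxy * sy"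
      unfolding sxy_def sy_def x \<open>ex = b\<close> by (rule svar_parity_change_letter)
    finally show ?thesis .
  qed
  have Gy: "ey = b \<Longrightarrow> sx * Gy = sxy * Gy'"
  proof -
    assume "ey = b"
    have "even (gen_parity a b * svar_parity x + svar_parity x * svar_parity (a, ky)
        + svar_parity x * svar_parity y)"
      unfolding y \<open>ey = b\<close> gen_parity_def svar_parity_def by (simp add: algebra_simps)
    then have "sx * (-1) ^ (svar_parity x * svar_parity (a, ky)) = sxy"
      unfolding sx_def sxy_def by (rule minus_one_power_mult_eq)
    then show ?thesis
      using supersymmetricD[OF sym, of "[]" x "(a, ky)" q]
      unfolding Gy_def Gy'_def by (simp add: mult.assoc[symmetric])
  qed
  have "L = sxy * L'"
    unfolding L_def L'_def sxy_def lin_eval_smult[symmetric]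
    by (rule lin_eval_cong) (use supersymmetricD[OF sym, of "[]" x y] in simp)
  then show ?thesis
    unfolding lhs rhs sxy_def[symmetric]
    using Gy by (cases "ex = b"; cases "ey = b") (simp_all add: Gx mult.commute algebra_simps)
qed

lemma lin_eval_polar_swap:
  "supersymmetric G \<Longrightarrow> lin_eval G (polar a b (p @ x # y # q))
    = (-1) ^ (svar_parity x * svar_parity y) * lin_eval G (polar a b (p @ y # x # q))"
proof (induct p arbitrary: G)
  case Nil
  then show ?case unfolding append_Nil by (rule lin_eval_polar_swap_head)
next
  case (Cons z p)
  have "lin_eval (\<lambda>q. G (z # q)) (polar a b (p @ x # y # q))
    = (-1) ^ (svar_parity x * svar_parity y) * lin_eval (\<lambda>q. G (z # q)) (polar a b (p @ y # x # q))"
    using Cons supersymmetric_Cons by blast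
  moreover have "G ((a, snd z) # p @ x # y # q)
    = (-1) ^ (svar_parity x * svar_parity y) * G ((a, snd z) # p @ y # x # q)"
    using supersymmetricD[OF Cons(2), of "(a, snd z) # p" x y q] by simp
  ultimately show ?case
    unfolding append_Cons lin_eval_polar_Cons by (simp add: algebra_simps)
qed

lemma act_supersymmetric: "supersymmetric F \<Longrightarrow> supersymmetric (act r F)"
proof (induct r)
  case Nil
  then show ?case by simp
next
  case (Cons g r)
  then have sym: "supersymmetric (act r F)" by blast
  show ?case
    unfolding supersymmetric_def
  proof (intro allI)
    fix p x y q
    have "lin_eval (act r F) (polar (fst g) (snd g) (p @ x # y # q))
      = (-1) ^ (svar_parity x * svar_parity y) * lin_eval (act r F) (polar (fst g) (snd g) (p @ y # x # q))"
      by (rule lin_eval_polar_swap[OF sym])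
    moreover have "lin_eval (act r F) (mult_var (fst g) (snd g) (p @ x # y # q))
      = (-1) ^ (svar_parity x * svar_parity y) * lin_eval (act r F) (mult_var (fst g) (snd g) (p @ y # x # q))"
      using supersymmetricD[OF sym, of "(fst g, prop_index (snd g)) # p" x y q]
      by (simp add: lin_eval_mult_var)
    ultimately show "act (g # r) F (p @ x # y # q)
      = (-1) ^ (svar_parity x * svar_parity y) * act (g # r) F (p @ y # x # q)"
      by (simp add: lin_eval_gen_action algebra_simps)
  qed
qed

lemma proper_eval_eq:
  "proper_eval p = (if \<forall>z\<in>set p. is_proper (fst z)
     then prod_list (map (\<lambda>z. var (prop_index (fst z)) (snd z)) p) else 0)"
  by (induct p rule: proper_eval.induct) auto

lemma supersymmetric_proper_eval: "supersymmetric proper_eval"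
  unfolding supersymmetric_def
proof (intro allI)
  fix p x y q
  show "proper_eval (p @ x # y # q) = (-1) ^ (svar_parity x * svar_parity y) * proper_eval (p @ y # x # q)"
  proof (cases "is_proper (fst x) \<and> is_proper (fst y)")
    case True
    then have "svar_parity x = 2" "svar_parity y = 2" by (auto simp: svar_parity_def is_proper_parity)
    then show ?thesis using True by (simp add: proper_eval_eq algebra_simps)
  next
    case False
    then show ?thesis by (auto simp: proper_eval_eq)
  qed
qed

lemma lin_eval_gen_action_gen_action:
  "lin_eval (\<lambda>q. lin_eval F (gen_action (a, b) q)) (gen_action (c, d) p) =
     lin_eval (\<lambda>q. lin_eval F (polar a b q)) (polar c d p)
     + (if is_proper b then lin_eval (\<lambda>q. F ((a, prop_index b) # q)) (polar c d p) else 0)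
     + (if is_proper d then (if c = b then F ((a, prop_index d) # p) else 0)
          + polar_sign a b (c, prop_index d) * lin_eval (\<lambda>q. F ((c, prop_index d) # q)) (polar a b p)
          + (if is_proper b then F ((a, prop_index b) # (c, prop_index d) # p) else 0)
        else 0)"
  by (simp add: lin_eval_gen_action lin_eval_mult_var lin_eval_add lin_eval_if lin_eval_map_Cons)

lemma gen_action_commutator:
  assumes sym: "supersymmetric F"
  shows "lin_eval (\<lambda>q. lin_eval F (gen_action (a, b) q)) (gen_action (c, d) p)
      - (-1) ^ (gen_parity a b * gen_parity c d) * lin_eval (\<lambda>q. lin_eval F (gen_action (c, d) q)) (gen_action (a, b) p)
    = (if b = c then lin_eval F (gen_action (a, d) p) else 0)
      - (-1) ^ (gen_parity a b * gen_parity c d) * (if a = d then lin_eval F (gen_action (c, b) p) else 0)"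
proof -
  define s where "s = (-1::cpoly) ^ (gen_parity a b * gen_parity c d)"
  define b' where "b' = prop_index b"
  define d' where "d' = prop_index d"
  define PP where "PP = lin_eval (\<lambda>q. lin_eval F (polar a b q)) (polar c d p)"
  define PP' where "PP' = lin_eval (\<lambda>q. lin_eval F (polar c d q)) (polar a b p)"
  define Pad where "Pad = lin_eval F (polar a d p)"
  define Pcb where "Pcb = lin_eval F (polar c b p)"
  define Vb where "Vb = lin_eval (\<lambda>q. F ((a, b') # q)) (polar c d p)"
  define Vd where "Vd = lin_eval (\<lambda>q. F ((c, d') # q)) (polar a b p)"
  define Fa where "Fa = F ((a, d') # p)"
  define Fc where "Fc = F ((c, b') # p)"
  define Fbd where "Fbd = F ((a, b') # (c, d') # p)"
  define Fdb where "Fdb = F ((c, d') # (a, b') # p)"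
  define sa where "sa = polar_sign a b (c, d')"
  define sc where "sc = polar_sign c d (a, b')"
  have sa: "is_proper d \<Longrightarrow> sa = s"
    unfolding sa_def s_def gen_parity_def svar_parity_def by (simp add: is_proper_parity)
  have sc: "is_proper b \<Longrightarrow> s * sc = 1" "is_proper b \<Longrightarrow> sc * s = 1"
  proof -
    assume "is_proper b"
    then have "even (gen_parity a b * gen_parity c d + gen_parity c d * svar_parity (a, b'))"
      unfolding gen_parity_def svar_parity_def by (simp add: is_proper_parity algebra_simps)
    then show "s * sc = 1" "sc * s = 1"
      unfolding s_def sc_def by (simp_all add: power_add[symmetric] mult.commute)
  qed
  have swap: "is_proper b \<Longrightarrow> is_proper d \<Longrightarrow> Fbd = s * Fdb"
  proof -
    assume "is_proper b" "is_proper d"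
    then have "svar_parity (a, b') * svar_parity (c, d') = gen_parity a b * gen_parity c d"
      unfolding gen_parity_def svar_parity_def by (simp add: is_proper_parity)
    then show ?thesis
      using supersymmetricD[OF sym, of "[]" "(a, b')" "(c, d')" p]
      unfolding Fbd_def Fdb_def s_def by simp
  qed
  have lhs: "lin_eval (\<lambda>q. lin_eval F (gen_action (a, b) q)) (gen_action (c, d) p)
      - s * lin_eval (\<lambda>q. lin_eval F (gen_action (c, d) q)) (gen_action (a, b) p)
    = (PP - s * PP') + (if is_proper d \<and> c = b then Fa else 0) - s * (if is_proper b \<and> a = d then Fc else 0)"
    unfolding lin_eval_gen_action_gen_action
      PP_def[symmetric] PP'_def[symmetric] b'_def[symmetric] d'_def[symmetric]
      Vb_def[symmetric] Vd_def[symmetric] Fa_def[symmetric] Fc_def[symmetric]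
      Fbd_def[symmetric] Fdb_def[symmetric] sa_def[symmetric] sc_def[symmetric]
    by (cases "is_proper b"; cases "is_proper d") (simp_all add: sa sc swap algebra_simps)
  have polar: "PP - s * PP' = (if b = c then Pad else 0) - s * (if a = d then Pcb else 0)"
    unfolding PP_def PP'_def Pad_def Pcb_def s_def by (rule polar_commutator)
  have ad: "lin_eval F (gen_action (a, d) p) = Pad + (if is_proper d then Fa else 0)"
    and cb: "lin_eval F (gen_action (c, b) p) = Pcb + (if is_proper b then Fc else 0)"
    unfolding Pad_def Pcb_def Fa_def Fc_def b'_def d'_def
    by (simp_all add: lin_eval_gen_action lin_eval_mult_var)
  show ?thesis
    unfolding s_def[symmetric] lhs polar ad cb
    by (cases "b = c"; cases "a = d") (simp_all add: algebra_simps)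
qed

lemma virtual_koszul_super_rel:
  "virtual_koszul (u @ [(a, b), (c, d)] @ v)
     - (-1) ^ (gen_parity a b * gen_parity c d) * virtual_koszul (u @ [(c, d), (a, b)] @ v)
   = (if b = c then virtual_koszul (u @ [(a, d)] @ v) else 0)
     - (-1) ^ (gen_parity a b * gen_parity c d) * (if a = d then virtual_koszul (u @ [(c, b)] @ v) else 0)"
proof -
  define F where "F = act (rev u) proper_eval"
  define s where "s = (-1::cpoly) ^ (gen_parity a b * gen_parity c d)"
  define D1 where "D1 = (if b = c then 1 else (0::cpoly))"
  define D2 where "D2 = (if a = d then 1 else (0::cpoly))"
  have vk: "\<And>X. virtual_koszul (u @ X @ v) = act (rev v) (act (rev X) F) []"
    unfolding virtual_koszul_def F_def by (simp add: act_append)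
  have "supersymmetric F"
    unfolding F_def by (rule act_supersymmetric[OF supersymmetric_proper_eval])
  then have rel: "(\<lambda>p. act [(c, d), (a, b)] F p - s * act [(a, b), (c, d)] F p)
      = (\<lambda>p. D1 * act [(a, d)] F p - s * (D2 * act [(c, b)] F p))"
    using gen_action_commutator unfolding s_def D1_def D2_def act.simps act_Nil_fun by (auto intro!: ext)
  have "act (rev v) (act [(c, d), (a, b)] F) [] - s * act (rev v) (act [(a, b), (c, d)] F) []
      = act (rev v) (\<lambda>p. act [(c, d), (a, b)] F p - s * act [(a, b), (c, d)] F p) []"
    unfolding act_diff ..
  also have "\<dots> = D1 * act (rev v) (act [(a, d)] F) [] - s * (D2 * act (rev v) (act [(c, b)] F) [])"
    unfolding rel by (simp add: act_diff act_smult act_single)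
  finally show ?thesis
    unfolding vk s_def[symmetric] D1_def D2_def by (cases "b = c"; cases "a = d") simp_all
qed

section \<open>Agreement with the Koszul map on proper words\<close>

lemma Dl_eq_sum_superset:
  assumes "finite S" "Poly_Mapping.keys p \<subseteq> S"
  shows "Dl n i j p = (\<Sum>m\<in>S. \<Sum>k\<in>{1..n}.
        Poly_Mapping.single (m - Poly_Mapping.single (j, k) 1 + Poly_Mapping.single (i, k) 1)
          (Poly_Mapping.lookup p m * of_nat (Poly_Mapping.lookup m (j, k))))"
  unfolding Dl_def by (rule sum.mono_neutral_left) (use assms in \<open>auto simp: in_keys_iff\<close>)

lemma Dl_add: "Dl n i j (p + q) = Dl n i j p + Dl n i j q"
proof -
  let ?S = "Poly_Mapping.keys p \<union> Poly_Mapping.keys q"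
  have fin: "finite ?S" by simp
  have "Dl n i j p = (\<Sum>m\<in>?S. \<Sum>k\<in>{1..n}.
      Poly_Mapping.single (m - Poly_Mapping.single (j, k) 1 + Poly_Mapping.single (i, k) 1)
        (Poly_Mapping.lookup p m * of_nat (Poly_Mapping.lookup m (j, k))))"
    and "Dl n i j q = (\<Sum>m\<in>?S. \<Sum>k\<in>{1..n}.
      Poly_Mapping.single (m - Poly_Mapping.single (j, k) 1 + Poly_Mapping.single (i, k) 1)
        (Poly_Mapping.lookup q m * of_nat (Poly_Mapping.lookup m (j, k))))"
    by (rule Dl_eq_sum_superset[OF fin]; auto)+
  then show ?thesis
    unfolding Dl_eq_sum_superset[OF fin keys_add]
    by (simp add: lookup_add distrib_right single_add sum.distrib)
qed

lemma Dl_zero: "Dl n i j 0 = 0"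
  by (simp add: Dl_def)

lemma Dl_monomial:
  "Dl n i j (Poly_Mapping.single m 1) =
     (\<Sum>k\<in>{1..n}. Poly_Mapping.single (m - Poly_Mapping.single (j, k) 1 + Poly_Mapping.single (i, k) 1)
        (of_nat (Poly_Mapping.lookup m (j, k))))"
  by (simp add: Dl_def)

lemma monomial_remove_var_times_var:
  fixes M :: "(nat \<times> nat) \<Rightarrow>\<^sub>0 nat" and ek jk ik :: "nat \<times> nat"
  defines "E \<equiv> Poly_Mapping.single ek 1" and "J \<equiv> Poly_Mapping.single jk 1" and "I \<equiv> Poly_Mapping.single ik 1"
  shows "Poly_Mapping.single (E + M - J + I) (of_nat (Poly_Mapping.lookup (E + M) jk) :: complex)
    = (if jk = ek then Poly_Mapping.single (I + M) 1 else 0)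
      + Poly_Mapping.single (E + (M - J + I)) (of_nat (Poly_Mapping.lookup M jk))"
proof (cases "jk = ek")
  case False
  have "E + M - J + I = E + (M - J + I)"
    by (rule poly_mapping_eqI) (use False in \<open>auto simp: E_def J_def lookup_add lookup_minus lookup_single when_def\<close>)
  moreover have "Poly_Mapping.lookup (E + M) jk = Poly_Mapping.lookup M jk"
    using False by (simp add: E_def lookup_add lookup_single when_def)
  ultimately show ?thesis using False by simp
next
  case True
  have m1: "E + M - J + I = I + M"
    by (rule poly_mapping_eqI) (use True in \<open>auto simp: E_def J_def lookup_add lookup_minus lookup_single when_def\<close>)
  have lk: "Poly_Mapping.lookup (E + M) jk = Suc (Poly_Mapping.lookup M jk)"
    using True by (simp add: E_def lookup_add)
  show ?thesis
  proof (cases "Poly_Mapping.lookup M jk = 0")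
    case True
    then show ?thesis using \<open>jk = ek\<close> m1 lk by simp
  next
    case False
    have "E + (M - J + I) = I + M"
      by (rule poly_mapping_eqI)
        (use True False in \<open>auto simp: E_def J_def I_def lookup_add lookup_minus lookup_single when_def\<close>)
    then show ?thesis using \<open>jk = ek\<close> m1 lk
      by (simp add: single_add[symmetric] add.commute)
  qed
qed

lemma var_times_monomial:
  "var e k * Poly_Mapping.single M 1 = Poly_Mapping.single (Poly_Mapping.single (e, k) 1 + M) 1"
  by (simp add: var_def mult_single)

lemma Dl_var_times_monomial:
  assumes "k0 \<in> {1..n}"
  shows "Dl n i j (Poly_Mapping.single (Poly_Mapping.single (e, k0) 1 + M) 1)
    = (if e = j then Poly_Mapping.single (Poly_Mapping.single (i, k0) 1 + M) 1 else 0)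
      + var e k0 * Dl n i j (Poly_Mapping.single M 1)"
proof -
  let ?X = "\<lambda>k. Poly_Mapping.single (i, k) 1 + M"
  let ?Y = "\<lambda>k. Poly_Mapping.single (Poly_Mapping.single (e, k0) 1
              + (M - Poly_Mapping.single (j, k) 1 + Poly_Mapping.single (i, k) 1))
              (of_nat (Poly_Mapping.lookup M (j, k)) :: complex)"
  have "Dl n i j (Poly_Mapping.single (Poly_Mapping.single (e, k0) 1 + M) 1)
      = (\<Sum>k\<in>{1..n}. (if (j, k) = (e, k0) then Poly_Mapping.single (?X k) 1 else 0) + ?Y k)"
    unfolding Dl_monomial by (rule sum.cong[OF refl]) (rule monomial_remove_var_times_var)
  also have "\<dots> = (\<Sum>k\<in>{1..n}. if (j, k) = (e, k0) then Poly_Mapping.single (?X k) 1 else 0)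
      + (\<Sum>k\<in>{1..n}. ?Y k)"
    by (rule sum.distrib)
  also have "(\<Sum>k\<in>{1..n}. if (j, k) = (e, k0) then Poly_Mapping.single (?X k) 1 else 0)
      = (if e = j then Poly_Mapping.single (?X k0) 1 else 0)"
    using assms by (cases "e = j") (simp_all add: sum.delta')
  also have "(\<Sum>k\<in>{1..n}. ?Y k) = var e k0 * Dl n i j (Poly_Mapping.single M 1)"
    unfolding Dl_monomial sum_distrib_left var_def by (simp add: mult_single)
  finally show ?thesis .
qed

lemma rho_add: "rho n i j (p + q) = rho n i j p + rho n i j q"
  by (simp add: rho_def Dl_add algebra_simps)

lemma rho_zero: "rho n i j 0 = 0"
  by (simp add: rho_def Dl_zero)

definition rho_seq :: "nat \<Rightarrow> gen list \<Rightarrow> cpoly \<Rightarrow> cpoly" where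
  "rho_seq n r x = foldl (\<lambda>x g. rho n (prop_index (fst g)) (prop_index (snd g)) x) x r"

lemma rho_seq_Nil [simp]: "rho_seq n [] x = x"
  by (simp add: rho_seq_def)

lemma rho_seq_Cons [simp]:
  "rho_seq n (g # r) x = rho_seq n r (rho n (prop_index (fst g)) (prop_index (snd g)) x)"
  by (simp add: rho_seq_def)

lemma rho_seq_add: "rho_seq n r (x + y) = rho_seq n r x + rho_seq n r y"
  by (induct r arbitrary: x y) (simp_all add: rho_add)

lemma rho_seq_zero: "rho_seq n r 0 = 0"
  by (induct r) (simp_all add: rho_zero)

definition proper_word :: "nat \<Rightarrow> sword \<Rightarrow> bool" where
  "proper_word n p \<longleftrightarrow> (\<forall>z\<in>set p. is_proper (fst z) \<and> snd z \<in> {1..n})"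

definition proper_gen :: "nat \<Rightarrow> gen \<Rightarrow> bool" where
  "proper_gen n g \<longleftrightarrow> (\<exists>i j. g = (Prop i, Prop j) \<and> i \<in> {1..n} \<and> j \<in> {1..n})"

definition monomial_of :: "sword \<Rightarrow> (nat \<times> nat) \<Rightarrow>\<^sub>0 nat" where
  "monomial_of p = sum_list (map (\<lambda>z. Poly_Mapping.single (prop_index (fst z), snd z) 1) p)"

lemma proper_eval_monomial_of: "proper_word n p \<Longrightarrow> proper_eval p = Poly_Mapping.single (monomial_of p) 1"
proof (induct p)
  case Nil
  then show ?case by (simp add: monomial_of_def)
next
  case (Cons x w)
  obtain l k where x: "x = (l, k)" by force
  with Cons(2) obtain e where "l = Prop e" by (cases l) (auto simp: proper_word_def)
  moreover have "proper_word n w" using Cons(2) by (simp add: proper_word_def)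
  ultimately show ?case using Cons(1) unfolding x by (simp add: var_times_monomial monomial_of_def)
qed

lemma polar_replaces_one_occurrence:
  "(c, q) \<in> set (polar a b p) \<Longrightarrow> \<exists>p1 k p2. p = p1 @ (b, k) # p2 \<and> q = p1 @ (a, k) # p2"
proof (induct p arbitrary: c q)
  case Nil
  then show ?case by simp
next
  case (Cons x w)
  show ?case
  proof (cases "fst x = b \<and> c = 1 \<and> q = (a, snd x) # w")
    case True
    then show ?thesis by (intro exI[of _ "[]"]) (cases x, auto)
  next
    case False
    with Cons(2) obtain c' q' where "(c', q') \<in> set (polar a b w)" "q = x # q'"
      by (auto split: if_splits)
    with Cons(1) obtain p1 k p2 where "w = p1 @ (b, k) # p2" "q' = p1 @ (a, k) # p2" by blast
    with \<open>q = x # q'\<close> show ?thesis by (intro exI[of _ "x # p1"]) auto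
  qed
qed

lemma polar_coeff_even: "even (gen_parity a b) \<Longrightarrow> (c, q) \<in> set (polar a b p) \<Longrightarrow> c = 1"
proof (induct p arbitrary: c q)
  case Nil
  then show ?case by simp
next
  case (Cons x w)
  then have "polar_sign a b x = 1" by (auto elim!: evenE simp: mult.assoc)
  then show ?case using Cons by (auto split: if_splits)
qed

lemma lin_eval_polar_proper:
  "proper_word n p \<Longrightarrow> lin_eval proper_eval (polar (Prop i) (Prop j) p) = Dl n i j (proper_eval p)"
proof (induct p)
  case Nil
  show ?case by (simp add: Dl_monomial[of n i j 0, simplified])
next
  case (Cons x w)
  obtain l k0 where x: "x = (l, k0)" by force
  with Cons(2) obtain e where l: "l = Prop e" and k0: "k0 \<in> {1..n}"
    by (cases l) (auto simp: proper_word_def)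
  have w: "proper_word n w" using Cons(2) by (simp add: proper_word_def)
  have "lin_eval proper_eval (polar (Prop i) (Prop j) (x # w))
      = (if e = j then proper_eval ((Prop i, k0) # w) else 0)
        + var e k0 * lin_eval proper_eval (polar (Prop i) (Prop j) w)"
    unfolding lin_eval_polar_Cons x l by (simp add: gen_parity_def lin_eval_smult)
  also have "\<dots> = Dl n i j (proper_eval (x # w))"
    unfolding Cons(1)[OF w] x l
    using Dl_var_times_monomial[OF k0, of i j e "monomial_of w"] proper_eval_monomial_of[OF w]
    by (simp add: var_times_monomial)
  finally show ?case .
qed

lemma lin_eval_rho_seq:
  "\<forall>(c, q)\<in>set T. c = 1 \<and> proper_word n q \<Longrightarrow> \<forall>q. proper_word n q \<longrightarrow> G q = rho_seq n r (proper_eval q)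
   \<Longrightarrow> lin_eval G T = rho_seq n r (lin_eval proper_eval T)"
  by (induct T) (auto simp: rho_seq_add rho_seq_zero)

lemma gen_action_proper:
  assumes "i \<in> {1..n}" "j \<in> {1..n}" "proper_word n p" "(c, q) \<in> set (gen_action (Prop i, Prop j) p)"
  shows "c = 1 \<and> proper_word n q"
proof -
  consider "(c, q) \<in> set (polar (Prop i) (Prop j) p)" | "c = 1" "q = (Prop i, j) # p"
    using assms(4) unfolding gen_action_def mult_var_def by auto
  then show ?thesis
  proof cases
    case 1
    then have "c = 1" by (rule polar_coeff_even[rotated]) (simp add: gen_parity_def)
    moreover obtain p1 k p2 where "p = p1 @ (Prop j, k) # p2" "q = p1 @ (Prop i, k) # p2"
      using polar_replaces_one_occurrence[OF 1] by blast
    ultimately show ?thesis using assms(3) by (auto simp: proper_word_def)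
  next
    case 2
    then show ?thesis using assms by (auto simp: proper_word_def)
  qed
qed

lemma act_proper:
  "\<forall>g\<in>set r. proper_gen n g \<Longrightarrow> proper_word n p \<Longrightarrow> act r proper_eval p = rho_seq n r (proper_eval p)"
proof (induct r arbitrary: p)
  case Nil
  then show ?case by simp
next
  case (Cons g r)
  then obtain i j where g: "g = (Prop i, Prop j)" and ij: "i \<in> {1..n}" "j \<in> {1..n}"
    by (auto simp: proper_gen_def)
  have IH: "\<forall>q. proper_word n q \<longrightarrow> act r proper_eval q = rho_seq n r (proper_eval q)"
    using Cons by auto
  have "act (g # r) proper_eval p = rho_seq n r (lin_eval proper_eval (gen_action g p))"
    using lin_eval_rho_seq[OF _ IH] gen_action_proper[OF ij Cons(3)] unfolding g by auto
  also have "lin_eval proper_eval (gen_action g p) = rho n i j (proper_eval p)"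
    unfolding lin_eval_gen_action lin_eval_mult_var g
    using lin_eval_polar_proper[OF Cons(3)] by (simp add: rho_def)
  finally show ?case using g by simp
qed

lemma virtual_koszul_proper: "\<forall>g\<in>set w. proper_gen n g \<Longrightarrow> virtual_koszul w = K_word n w"
  unfolding virtual_koszul_def K_word_def
  using act_proper[of "rev w" n "[]"]
  by (simp add: proper_word_def rho_seq_def foldr_conv_foldl case_prod_beta)

section \<open>Irregular words are annihilated\<close>

definition count_letter :: "letter \<Rightarrow> sword \<Rightarrow> nat" where
  "count_letter \<gamma> p = length (filter (\<lambda>z. fst z = \<gamma>) p)"

lemma count_letter_simps [simp]:
  "count_letter \<gamma> [] = 0"
  "count_letter \<gamma> (x # p) = (if fst x = \<gamma> then 1 else 0) + count_letter \<gamma> p"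
  "count_letter \<gamma> (p @ q) = count_letter \<gamma> p + count_letter \<gamma> q"
  by (auto simp: count_letter_def)

lemma polar_count_letter:
  "(c, q) \<in> set (polar a b p) \<Longrightarrow>
     count_letter \<gamma> q + (if b = \<gamma> then 1 else 0) = count_letter \<gamma> p + (if a = \<gamma> then 1 else 0)"
  by (drule polar_replaces_one_occurrence) auto

lemma polar_absent: "count_letter b p = 0 \<Longrightarrow> polar a b p = []"
  by (induct p) (auto split: if_splits)

lemma polar_unique_occurrence:
  "count_letter b p1 = 0 \<Longrightarrow> count_letter b p2 = 0 \<Longrightarrow> even (gen_parity a b) \<Longrightarrow>
     polar a b (p1 @ (b, k) # p2) = [(1, p1 @ (a, k) # p2)]"
proof (induct p1)
  case Nil
  then show ?case by (simp add: polar_absent)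
next
  case (Cons x p1)
  then have "polar_sign a b x = 1" by (auto elim!: evenE simp: mult.assoc)
  then show ?case using Cons by (auto split: if_splits)
qed

text \<open>irregular_from \<gamma> r c: some prefix of r, acting on a word with c occurrences of \<gamma>,
  asks to polarize away more \<gamma>'s than are available.\<close>

definition irregular_from :: "letter \<Rightarrow> gen list \<Rightarrow> nat \<Rightarrow> bool" where
  "irregular_from \<gamma> r c \<longleftrightarrow> (\<exists>i < length r. length (filter (\<lambda>g. snd g = \<gamma>) (take (Suc i) r))
      > length (filter (\<lambda>g. fst g = \<gamma>) (take i r)) + c)"

lemma virtual_not_proper: "virtual \<gamma> \<Longrightarrow> \<not> is_proper \<gamma>"
  by (cases \<gamma>) auto

lemma gen_action_count_letter:
  assumes "virtual \<gamma>" "(c, q) \<in> set (gen_action (a, b) p)"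
  shows "count_letter \<gamma> q + (if b = \<gamma> then 1 else 0) = count_letter \<gamma> p + (if a = \<gamma> then 1 else 0)"
proof -
  consider "(c, q) \<in> set (polar a b p)" | "is_proper b" "q = (a, prop_index b) # p"
    using assms(2) unfolding gen_action_def mult_var_def by (auto split: if_splits)
  then show ?thesis
  proof cases
    case 1
    then show ?thesis by (rule polar_count_letter)
  next
    case 2
    then have "b \<noteq> \<gamma>" using virtual_not_proper[OF assms(1)] by auto
    then show ?thesis using 2 by simp
  qed
qed

lemma act_irregular_from: "virtual \<gamma> \<Longrightarrow> irregular_from \<gamma> r (count_letter \<gamma> p) \<Longrightarrow> act r G p = 0"
proof (induct r arbitrary: p)
  case Nil
  then show ?case by (simp add: irregular_from_def)
next
  case (Cons g r)
  obtain a b where g: "g = (a, b)" by force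
  from Cons(3) obtain i where i: "i < Suc (length r)"
    and ineq: "length (filter (\<lambda>g. snd g = \<gamma>) (take (Suc i) (g # r)))
      > length (filter (\<lambda>g. fst g = \<gamma>) (take i (g # r))) + count_letter \<gamma> p"
    unfolding irregular_from_def by auto
  show ?case
  proof (cases i)
    case 0
    then have "b = \<gamma>" "count_letter \<gamma> p = 0" using ineq g by (auto split: if_splits)
    then have "gen_action g p = []"
      using Cons(2) g by (simp add: gen_action_def mult_var_def polar_absent virtual_not_proper)
    then show ?thesis by simp
  next
    case (Suc i')
    show ?thesis
    proof (simp, rule lin_eval_eq_0)
      fix c q assume "(c, q) \<in> set (gen_action g p)"
      then have "count_letter \<gamma> q + (if b = \<gamma> then 1 else 0) = count_letter \<gamma> p + (if a = \<gamma> then 1 else 0)"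
        unfolding g by (rule gen_action_count_letter[OF Cons(2)])
      then have "irregular_from \<gamma> r (count_letter \<gamma> q)"
        unfolding irregular_from_def using i ineq unfolding Suc g
        by (intro exI[of _ i']) (auto split: if_splits)
      then show "act r G q = 0" by (rule Cons(1)[OF Cons(2)])
    qed
  qed
qed

lemma card_filter_take:
  "t \<le> length xs \<Longrightarrow> card {j. j < t \<and> P (xs ! j)} = length (filter P (take t xs))"
proof (induct t)
  case 0
  then show ?case by simp
next
  case (Suc t)
  have "{j. j < Suc t \<and> P (xs ! j)} = {j. j < t \<and> P (xs ! j)} \<union> (if P (xs ! t) then {t} else {})"
    by (auto simp: less_Suc_eq)
  moreover have "take (Suc t) xs = take t xs @ [xs ! t]"
    using Suc(2) by (simp add: take_Suc_conv_app_nth)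
  ultimately show ?case using Suc by (simp add: card_insert_if)
qed

lemma irregular_imp_irregular_from: "irregular m \<Longrightarrow> \<exists>\<gamma>. virtual \<gamma> \<and> irregular_from \<gamma> (rev m) 0"
proof -
  assume "irregular m"
  then obtain i \<gamma> where i: "i < length (rev m)" and v: "virtual \<gamma>"
    and c: "card {j. j \<le> i \<and> snd (rev m ! j) = \<gamma>} > card {j. j < i \<and> fst (rev m ! j) = \<gamma>}"
    unfolding irregular_def Let_def by blast
  have "{j. j \<le> i \<and> snd (rev m ! j) = \<gamma>} = {j. j < Suc i \<and> snd (rev m ! j) = \<gamma>}" by auto
  then have "length (filter (\<lambda>g. snd g = \<gamma>) (take (Suc i) (rev m)))
      > length (filter (\<lambda>g. fst g = \<gamma>) (take i (rev m)))"
    using c i card_filter_take[of "Suc i" "rev m" "\<lambda>g. snd g = \<gamma>"] card_filter_take[of i "rev m" "\<lambda>g. fst g = \<gamma>"]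
    by simp
  then show ?thesis using v i unfolding irregular_from_def by auto
qed

lemma virtual_koszul_irregular: "irregular m \<Longrightarrow> virtual_koszul (u @ m) = 0"
proof -
  assume "irregular m"
  then obtain \<gamma> where "virtual \<gamma>" "irregular_from \<gamma> (rev m) 0"
    using irregular_imp_irregular_from by blast
  then have "act (rev m) (act (rev u) proper_eval) [] = 0"
    using act_irregular_from[of \<gamma> "rev m" "[]"] by simp
  then show ?thesis unfolding virtual_koszul_def by (simp add: act_append)
qed

section \<open>The column Capelli word\<close>

lemma act_create:
  "\<forall>z\<in>set p. \<exists>b. fst z = Neg b \<Longrightarrow>
     act (rev (map (\<lambda>(b, j). (Neg b, Prop j)) ys)) G p = G (map (\<lambda>(b, j). (Neg b, j)) ys @ p)"
proof (induct ys arbitrary: p rule: rev_induct)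
  case Nil
  then show ?case by simp
next
  case (snoc y ys)
  obtain b j where y: "y = (b, j)" by force
  have "count_letter (Prop j) p = 0" using snoc(2) by (induct p) auto
  then have "gen_action (Neg b, Prop j) p = [(1, (Neg b, j) # p)]"
    by (simp add: gen_action_def mult_var_def polar_absent)
  then show ?case using snoc y by auto
qed

lemma act_polarize_distinct:
  assumes "distinct (map (\<lambda>(i, b, j). b) xs)"
    and "\<forall>z\<in>set pre. \<forall>b. fst z \<noteq> Neg b" and "\<forall>z\<in>set post. \<forall>b. fst z \<noteq> Neg b"
  shows "act (rev (map (\<lambda>(i, b, j). (Prop i, Neg b)) xs)) G (pre @ map (\<lambda>(i, b, j). (Neg b, j)) xs @ post)
     = G (pre @ map (\<lambda>(i, b, j). (Prop i, j)) xs @ post)"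
  using assms
proof (induct xs arbitrary: post rule: rev_induct)
  case Nil
  then show ?case by simp
next
  case (snoc x xs)
  obtain i b j where x: "x = (i, b, j)" by (cases x) auto
  have c1: "count_letter (Neg b) (pre @ map (\<lambda>(i, b, j). (Neg b, j)) xs) = 0"
    using snoc(2,3) x by (fastforce simp: count_letter_def filter_empty_conv image_iff)
  have c2: "count_letter (Neg b) post = 0"
    using snoc(4) by (auto simp: count_letter_def filter_empty_conv)
  have "gen_action (Prop i, Neg b) (pre @ map (\<lambda>(i, b, j). (Neg b, j)) xs @ (Neg b, j) # post)
     = [(1, pre @ map (\<lambda>(i, b, j). (Neg b, j)) xs @ (Prop i, j) # post)]"
    using polar_unique_occurrence[OF c1 c2, of "Prop i" j]
    by (simp add: gen_action_def mult_var_def gen_parity_def)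
  then show ?case using snoc x by auto
qed

lemma virtual_koszul_capelli:
  assumes "length is = h" "length js = h" "length bs = h" "distinct bs"
  shows "virtual_koszul (capelli_word is js bs) = (\<Prod>k<h. var (is ! k) (js ! k))"
proof -
  define xs where "xs = zip is (zip bs js)"
  have len: "length xs = h" unfolding xs_def using assms by simp
  have A: "map (\<lambda>(i, b). (Prop i, Neg b)) (zip is bs) = map (\<lambda>(i, b, j). (Prop i, Neg b)) xs"
    and B: "map (\<lambda>(b, j). (Neg b, j)) (zip bs js) = map (\<lambda>(i, b, j). (Neg b, j)) xs"
    and C: "map (\<lambda>(i, b, j). b) xs = bs"
    unfolding xs_def by (rule nth_equalityI; use assms in auto)+
  have "virtual_koszul (capelli_word is js bs)
     = act (rev (map (\<lambda>(b, j). (Neg b, Prop j)) (zip bs js))) (act (rev (map (\<lambda>(i, b, j). (Prop i, Neg b)) xs)) proper_eval) []"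
    unfolding virtual_koszul_def capelli_word_def A by (simp add: act_append)
  also have "\<dots> = act (rev (map (\<lambda>(i, b, j). (Prop i, Neg b)) xs)) proper_eval ([] @ map (\<lambda>(i, b, j). (Neg b, j)) xs @ [])"
    using act_create[of "[]" "zip bs js"] B by simp
  also have "\<dots> = proper_eval (map (\<lambda>(i, b, j). (Prop i, j)) xs)"
    using act_polarize_distinct[of xs "[]" "[]"] C assms(4) by simp
  also have "\<dots> = prod_list (map (\<lambda>(i, b, j). var i j) xs)"
    by (induct xs) auto
  also have "\<dots> = (\<Prod>k<h. var (is ! k) (js ! k))"
    unfolding prod.list_conv_set_nth using len by (simp add: atLeast0LessThan xs_def assms)
  finally show ?thesis .
qed

section \<open>Linear extension and the theorem\<close>

lemma const_zero [simp]: "const 0 = 0"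
  by (simp add: const_def)

lemma const_one [simp]: "const 1 = 1"
  by (simp add: const_def)

lemma const_add: "const (a + b) = const a + const b"
  by (simp add: const_def single_add)

lemma const_mult: "const (a * b) = const a * const b"
  by (simp add: const_def mult_single)

lemma const_uminus: "const (- a) = - const a"
  by (simp add: const_def single_uminus)

lemma const_minus_one_power: "const ((-1) ^ k) = (-1) ^ k"
  by (induct k) (simp_all add: const_mult const_uminus)

definition virtual_koszul_lin :: "free \<Rightarrow> cpoly" where
  "virtual_koszul_lin x = (\<Sum>w\<in>{w. x w \<noteq> 0}. const (x w) * virtual_koszul w)"

lemma virtual_koszul_lin_superset:
  "finite S \<Longrightarrow> {w. x w \<noteq> 0} \<subseteq> S \<Longrightarrow> virtual_koszul_lin x = (\<Sum>w\<in>S. const (x w) * virtual_koszul w)"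
  unfolding virtual_koszul_lin_def by (rule sum.mono_neutral_left) (auto simp: const_def)

lemma virtual_koszul_lin_add:
  assumes "finite {w. x w \<noteq> 0}" "finite {w. y w \<noteq> 0}"
  shows "virtual_koszul_lin (\<lambda>w. x w + y w) = virtual_koszul_lin x + virtual_koszul_lin y"
proof -
  let ?S = "{w. x w \<noteq> 0} \<union> {w. y w \<noteq> 0}"
  have fin: "finite ?S" using assms by simp
  have "virtual_koszul_lin (\<lambda>w. x w + y w) = (\<Sum>w\<in>?S. const (x w + y w) * virtual_koszul w)"
    and "virtual_koszul_lin x = (\<Sum>w\<in>?S. const (x w) * virtual_koszul w)"
    and "virtual_koszul_lin y = (\<Sum>w\<in>?S. const (y w) * virtual_koszul w)"
    by (rule virtual_koszul_lin_superset[OF fin]; auto)+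
  then show ?thesis by (simp add: const_add distrib_right sum.distrib)
qed

lemma virtual_koszul_lin_smult:
  "virtual_koszul_lin (\<lambda>w. c * x w) = const c * virtual_koszul_lin x"
  by (cases "c = 0") (simp_all add: virtual_koszul_lin_def const_mult sum_distrib_left mult.assoc)

lemma virtual_koszul_lin_wmono: "virtual_koszul_lin (wmono w) = virtual_koszul w"
  by (simp add: virtual_koszul_lin_def wmono_def const_def)

lemma finite_support_wmono: "finite {v. wmono w v \<noteq> 0}"
  by (simp add: wmono_def)

lemma finite_support_smult:
  fixes x :: free
  shows "finite {w. x w \<noteq> 0} \<Longrightarrow> finite {w. c * x w \<noteq> 0}"
  by (rule finite_subset[of _ "{w. x w \<noteq> 0}"]) auto

lemma finite_support_lin_comb:
  fixes x y :: free
  shows "finite {w. x w \<noteq> 0} \<Longrightarrow> finite {w. y w \<noteq> 0} \<Longrightarrow> finite {w. c * x w + y w \<noteq> 0}"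
  by (rule finite_subset[of _ "{w. x w \<noteq> 0} \<union> {w. y w \<noteq> 0}"]) auto

lemma virtual_koszul_lin_lin_comb:
  fixes x y :: free
  shows "finite {w. x w \<noteq> 0} \<Longrightarrow> finite {w. y w \<noteq> 0} \<Longrightarrow>
     virtual_koszul_lin (\<lambda>w. c * x w + y w) = const c * virtual_koszul_lin x + virtual_koszul_lin y"
  by (subst virtual_koszul_lin_add)
     (auto simp: virtual_koszul_lin_smult intro: finite_subset[of _ "{w. x w \<noteq> 0}"])

lemma virtual_koszul_lin_diff:
  fixes x y :: free
  assumes "finite {w. x w \<noteq> 0}" "finite {w. y w \<noteq> 0}"
  shows "virtual_koszul_lin (\<lambda>w. x w - y w) = virtual_koszul_lin x - virtual_koszul_lin y"
  using virtual_koszul_lin_lin_comb[OF assms(2,1), of "-1"] by (simp add: const_uminus)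

lemma super_rel_annihilated:
  "finite {w. super_rel u g1 g2 v w \<noteq> 0} \<and> virtual_koszul_lin (super_rel u g1 g2 v) = 0"
proof -
  obtain a b where g1: "g1 = (a, b)" by force
  obtain c d where g2: "g2 = (c, d)" by force
  define s where "s = (-1::complex) ^ (gen_parity a b * gen_parity c d)"
  define d1 where "d1 = (if b = c then 1 else (0::complex))"
  define d2 where "d2 = (if a = d then 1 else (0::complex))"
  have rel: "super_rel u g1 g2 v = (\<lambda>w. 1 * wmono (u @ [(a, b), (c, d)] @ v) w
      + ((- s) * wmono (u @ [(c, d), (a, b)] @ v) w
      + ((- d1) * wmono (u @ [(a, d)] @ v) w + (s * d2) * wmono (u @ [(c, b)] @ v) w)))"
    unfolding super_rel_def g1 g2 Let_def s_def d1_def d2_def gen_parity_def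
    by (rule ext) (auto simp: algebra_simps)
  have "finite {w. super_rel u g1 g2 v w \<noteq> 0}"
    unfolding rel by (intro finite_support_lin_comb finite_support_smult finite_support_wmono)
  moreover have "virtual_koszul_lin (super_rel u g1 g2 v) = const 1 * virtual_koszul (u @ [(a, b), (c, d)] @ v)
      + (const (- s) * virtual_koszul (u @ [(c, d), (a, b)] @ v)
      + (const (- d1) * virtual_koszul (u @ [(a, d)] @ v) + const (s * d2) * virtual_koszul (u @ [(c, b)] @ v)))"
    unfolding rel
    by (simp only: virtual_koszul_lin_lin_comb virtual_koszul_lin_smult finite_support_wmono
        finite_support_lin_comb finite_support_smult virtual_koszul_lin_wmono)
  moreover have "\<dots> = 0"
    using virtual_koszul_super_rel[of u a b c d v] unfolding s_def d1_def d2_def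
    by (cases "b = c"; cases "a = d")
       (simp_all add: const_uminus const_mult const_minus_one_power algebra_simps)
  ultimately show ?thesis by simp
qed

lemma virtual_koszul_lin_span:
  "x \<in> lin_span (rel_gens n \<union> irr_gens n) \<Longrightarrow> finite {w. x w \<noteq> 0} \<and> virtual_koszul_lin x = 0"
proof (induct rule: lin_span.induct)
  case zero
  show ?case by (simp add: virtual_koszul_lin_def)
next
  case (step g x c)
  have "finite {w. g w \<noteq> 0} \<and> virtual_koszul_lin g = 0"
    using step(1) unfolding rel_gens_def irr_gens_def
    by (auto simp: finite_support_wmono virtual_koszul_lin_wmono virtual_koszul_irregular
        super_rel_annihilated)
  then show ?case
    using step(3) by (simp add: finite_support_lin_comb virtual_koszul_lin_lin_comb)
qed

lemma virtual_koszul_lin_Ugln: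
  assumes "in_Ugln n u"
  shows "virtual_koszul_lin u = Koszul n u"
  unfolding virtual_koszul_lin_def Koszul_def
proof (rule sum.cong[OF refl])
  fix w assume "w \<in> {w. u w \<noteq> 0}"
  then have "\<forall>g\<in>set w. proper_gen n g"
    using assms unfolding in_Ugln_def proper_gen_def by fastforce
  then show "const (u w) * virtual_koszul w = const (u w) * K_word n w"
    by (simp add: virtual_koszul_proper)
qed

theorem mainTheorem8:
  fixes n h :: nat and "is" js bs :: "nat list" and u :: free
  assumes "h \<ge> 1"
    and "length is = h" and "length js = h" and "length bs = h"
    and "\<forall>i\<in>set is. 1 \<le> i \<and> i \<le> n" and "\<forall>j\<in>set js. 1 \<le> j \<and> j \<le> n"
    and "distinct bs"
    and "in_Ugln n u"
    and "cong_Irr n (wmono (capelli_word is js bs)) u"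
  shows "Koszul n u = (\<Prod>k<h. var (is ! k) (js ! k))"
proof -
  \<comment> \<open>The bounds on h and on the entries of is and js are not needed.\<close>
  let ?cap = "capelli_word is js bs"
  have fin_u: "finite {w. u w \<noteq> 0}"
    using assms(8) by (simp add: in_Ugln_def)
  have "virtual_koszul_lin (\<lambda>w. wmono ?cap w - u w) = 0"
    using assms(9) virtual_koszul_lin_span unfolding cong_Irr_def by blast
  then have "virtual_koszul ?cap = virtual_koszul_lin u"
    by (simp add: virtual_koszul_lin_diff[OF finite_support_wmono fin_u] virtual_koszul_lin_wmono)
  also have "\<dots> = Koszul n u"
    using assms(8) by (rule virtual_koszul_lin_Ugln)
  finally show ?thesis
    using virtual_koszul_capelli[OF assms(2-4,7)] by simp
qed

end
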